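(* In the setting described in the context, let $i\in\mathcal V$ and let $z_{-i}=(z_j)_{j\ne i}$ satisfy $z_j<1$ for all $j\ne i$. Then the best response set of agent $i$ is the singleton $$\mathcal B_i(z_{-i})=\left\{\left[1-\frac{A_i(z_{-i})\pi_i\sigma_i^2}{B_i(z_{-i})}\right]_+\right\},$$ where $[a]_+=\max\{a,0\}$, $A_i(z_{-i})=\sum_{j\ne i}\frac{\pi_j}{1-z_j}$ and $B_i(z_{-i})=\sum_{j\ne i}\frac{\pi_j^2\sigma_j^2}{(1-z_j)^2}$. In particular $\mathcal B_i(z_{-i})\subseteq[0,1)$.
   Context: Let $n\ge2$ and $\mathcal V=\{1,\dots,n\}$. Let $P\in\mathbb{R}^{n\times n}$ be a row-stochastic, irreducible, aperiodic matrix (the graph on $\mathcal V$ with edge $(i,j)$ iff $P_{ij}>0$ is strongly connected with gcd of cycle lengths $1$) and $\pi$ the unique probability vector with $P'\pi=\pi$. For $z\in[0,1]^n$, $W(z)=(I-[z])P+[z]$ ($[z]$ the diagonal matrix with diagonal $z$) and $H(z)=\lim_{t\to\infty}W(z)^t$ (the limit exists and is row-stochastic). Let $\sigma_1^2,\dots,\sigma_n^2>0$. Agent $i$'s cost is $\upsilon_i(z)=\sum_jH_{ij}(z)^2\sigma_j^2$, written $\upsilon_i(z_i,z_{-i})$, and her best response set is $\mathcal B_i(z_{-i})=\arg\min_{z_i\in[0,1]}\upsilon_i(z_i,z_{-i})$. *)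

theory Defs
  imports "HOL-Analysis.Analysis"
begin

primrec mpow :: "real^'n^'n \<Rightarrow> nat \<Rightarrow> real^'n^'n" where
  "mpow A 0 = mat 1"
| "mpow A (Suc k) = A ** mpow A k"

definition row_stochastic :: "real^'n^'n \<Rightarrow> bool" where
  "row_stochastic P \<longleftrightarrow> (\<forall>i j. P$i$j \<ge> 0) \<and> (\<forall>i. (\<Sum>j\<in>UNIV. P$i$j) = 1)"

definition edges :: "real^'n^'n \<Rightarrow> ('n \<times> 'n) set" where
  "edges P = {(i,j). P$i$j > 0}"

definition irreducible_mat :: "real^'n^'n \<Rightarrow> bool" where
  "irreducible_mat P \<longleftrightarrow> (\<forall>i j. (i,j) \<in> (edges P)\<^sup>+)"

text \<open>Cycle lengths: lengths k \<ge> 1 of closed walks in the graph (gcd agrees with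
  that of simple cycle lengths).\<close>
definition aperiodic_mat :: "real^'n^'n \<Rightarrow> bool" where
  "aperiodic_mat P \<longleftrightarrow> Gcd {k::nat. k > 0 \<and> (\<exists>i. (i,i) \<in> (edges P) ^^ k)} = 1"

definition diagm :: "('n \<Rightarrow> real) \<Rightarrow> real^'n^'n" where
  "diagm z = (\<chi> i j. if i = j then z i else 0)"

definition Wmat :: "real^'n^'n \<Rightarrow> ('n \<Rightarrow> real) \<Rightarrow> real^'n^'n" where
  "Wmat P z = (mat 1 - diagm z) ** P + diagm z"

definition Hmat :: "real^'n^'n \<Rightarrow> ('n \<Rightarrow> real) \<Rightarrow> real^'n^'n" where
  "Hmat P z = lim (\<lambda>t. mpow (Wmat P z) t)"

definition cost :: "real^'n^'n \<Rightarrow> ('n \<Rightarrow> real) \<Rightarrow> 'n \<Rightarrow> ('n \<Rightarrow> real) \<Rightarrow> real" where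
  "cost P sigma2 i z = (\<Sum>j\<in>UNIV. (Hmat P z $ i $ j)^2 * sigma2 j)"

text \<open>Best response of agent i to z_{-i} (only the values z j, j \<noteq> i, matter).\<close>
definition best_response :: "real^'n^'n \<Rightarrow> ('n \<Rightarrow> real) \<Rightarrow> 'n \<Rightarrow> ('n \<Rightarrow> real) \<Rightarrow> real set" where
  "best_response P sigma2 i z =
     {x \<in> {0..1}. \<forall>y\<in>{0..1}. cost P sigma2 i (z(i := x)) \<le> cost P sigma2 i (z(i := y))}"

definition pos_part :: "real \<Rightarrow> real" where
  "pos_part a = max a 0"

end

theory Submission
  imports Defs
begin

text \<open>
  Fix x \<in> [0,1] and let W = W(z(i := x)). The vector c with c_i = \<pi>_i and
  c_j = \<pi>_j (1 - x) / (1 - z_j) for j \<noteq> i is left-fixed by W, every state reaches i in the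
  graph of W, and i has closed walks of all large lengths (by aperiodicity of P if x < 1, and
  because i is absorbing if x = 1). Doeblin's argument then shows that every row of H is
  c / (\<Sum>j. c_j), so with p = \<pi>_i and s = \<sigma>_i^2 the cost of agent i is
    (s p^2 + B (1 - x)^2) / (p + A (1 - x))^2.
  Completing the square writes this as \<alpha> + \<beta> ((r - x) / (D - x))^2 with \<beta> > 0,
  r = 1 - A p s / B and D = 1 + p / A > 1, and on [0,1] the square is uniquely minimised at
  max r 0.
\<close>

section \<open>Row-stochastic matrices and Doeblin's argument\<close>

lemma matrix_mult_entry: "(A ** B) $ a $ c = (\<Sum>k\<in>UNIV. A$a$k * B$k$c)"
  by (simp add: matrix_matrix_mult_def)

lemma mpow_add: "mpow A (m + n) = mpow A m ** mpow A n"
  by (induction m) (simp_all add: matrix_mul_assoc)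

lemma mpow_left_fixed: "w v* W = w \<Longrightarrow> w v* mpow W t = w"
  by (induction t) (simp_all add: vector_matrix_mul_assoc[symmetric])

lemma row_stochastic_rowD:
  assumes "row_stochastic Q"
  shows "\<forall>k. 0 \<le> Q $ a $ k" and "(\<Sum>k\<in>UNIV. Q $ a $ k) = 1"
  using assms by (auto simp: row_stochastic_def)

lemma row_stochastic_mult:
  assumes "row_stochastic A" "row_stochastic B"
  shows "row_stochastic (A ** B)"
proof -
  have "(\<Sum>c\<in>UNIV. (A ** B) $ a $ c) = (\<Sum>k\<in>UNIV. A$a$k * (\<Sum>c\<in>UNIV. B$k$c))" for a
    unfolding matrix_mult_entry sum_distrib_left by (rule sum.swap)
  with assms show ?thesis
    by (auto simp: row_stochastic_def matrix_mult_entry intro!: sum_nonneg)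
qed

lemma row_stochastic_mpow: "row_stochastic W \<Longrightarrow> row_stochastic (mpow W t)"
proof (induction t)
  case 0
  have "(\<Sum>c\<in>UNIV. (mat 1 :: real^'a^'a) $ a $ c) = 1" for a
    by (simp add: mat_def)
  then show ?case by (simp add: row_stochastic_def mat_def)
next
  case (Suc t)
  then show ?case by (simp add: row_stochastic_mult)
qed

lemma weighted_sum_bounds:
  fixes w f :: "'n::finite \<Rightarrow> real"
  assumes "\<forall>k. 0 \<le> w k" and "\<forall>k. lo \<le> f k \<and> f k \<le> hi"
  shows "(\<Sum>k\<in>UNIV. w k) * lo \<le> (\<Sum>k\<in>UNIV. w k * f k)
       \<and> (\<Sum>k\<in>UNIV. w k * f k) \<le> (\<Sum>k\<in>UNIV. w k) * hi"
  unfolding sum_distrib_right using assms by (auto intro!: sum_mono mult_left_mono)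

lemma weighted_sum_doeblin_bounds:
  fixes w f :: "'n::finite \<Rightarrow> real"
  assumes "\<forall>k. 0 \<le> w k" and "(\<Sum>k\<in>UNIV. w k) = 1" and "d \<le> w v"
    and "\<forall>k. lo \<le> f k \<and> f k \<le> hi"
  shows "d * f v + (1 - d) * lo \<le> (\<Sum>k\<in>UNIV. w k * f k)
       \<and> (\<Sum>k\<in>UNIV. w k * f k) \<le> d * f v + (1 - d) * hi"
proof -
  define r where "r k = w k - (if k = v then d else 0)" for k
  have "\<forall>k. 0 \<le> r k" using assms(1,3) by (simp add: r_def)
  moreover have "(\<Sum>k\<in>UNIV. r k) = 1 - d"
    using assms(2) by (simp add: r_def sum_subtractf)
  moreover have "(\<Sum>k\<in>UNIV. w k * f k) = d * f v + (\<Sum>k\<in>UNIV. r k * f k)"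
    unfolding r_def left_diff_distrib sum_subtractf by (simp add: if_distrib if_distribR cong: if_cong)
  ultimately show ?thesis
    using weighted_sum_bounds[OF _ assms(4), of r] by auto
qed

definition column_between :: "real^'n^'m \<Rightarrow> 'n \<Rightarrow> real \<Rightarrow> real \<Rightarrow> bool" where
  "column_between M c lo hi \<longleftrightarrow> (\<forall>k. lo \<le> M $ k $ c \<and> M $ k $ c \<le> hi)"

lemma column_between_mult:
  assumes Q: "row_stochastic Q" and "column_between M c lo hi"
  shows "column_between (Q ** M) c lo hi"
proof -
  have "lo \<le> (\<Sum>k\<in>UNIV. Q $ a $ k * M $ k $ c) \<and> (\<Sum>k\<in>UNIV. Q $ a $ k * M $ k $ c) \<le> hi" for a
    using weighted_sum_bounds[OF row_stochastic_rowD(1)[OF Q, of a], where f="\<lambda>k. M $ k $ c"]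
      assms(2) row_stochastic_rowD(2)[OF Q, of a]
    by (simp add: column_between_def)
  then show ?thesis by (simp add: column_between_def matrix_mult_entry)
qed

lemma column_between_mult_doeblin:
  assumes Q: "row_stochastic Q" and "\<forall>a. d \<le> Q $ a $ v" and "column_between M c lo (lo + h)"
  shows "column_between (Q ** M) c (d * M $ v $ c + (1 - d) * lo)
           (d * M $ v $ c + (1 - d) * lo + (1 - d) * h)"
proof -
  have "d * M $ v $ c + (1 - d) * lo \<le> (\<Sum>k\<in>UNIV. Q $ a $ k * M $ k $ c)
      \<and> (\<Sum>k\<in>UNIV. Q $ a $ k * M $ k $ c) \<le> d * M $ v $ c + (1 - d) * (lo + h)" for a
    using weighted_sum_doeblin_bounds[OF row_stochastic_rowD[OF Q, of a] assms(2)[rule_format]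
        assms(3)[unfolded column_between_def]] .
  then show ?thesis by (simp add: column_between_def matrix_mult_entry algebra_simps)
qed

lemma mpow_column_contracts:
  assumes W: "row_stochastic W" and col: "\<forall>a. d \<le> mpow W N $ a $ v"
  shows "\<exists>lo. column_between (mpow W (q * N)) c lo (lo + (1 - d) ^ q)"
proof (induction q)
  case 0
  show ?case by (intro exI[of _ 0]) (simp add: column_between_def mat_def)
next
  case (Suc q)
  then obtain lo where "column_between (mpow W (q * N)) c lo (lo + (1 - d) ^ q)" ..
  then have "column_between (mpow W N ** mpow W (q * N)) c (d * mpow W (q * N) $ v $ c + (1 - d) * lo)
      (d * mpow W (q * N) $ v $ c + (1 - d) * lo + (1 - d) ^ Suc q)"
    using column_between_mult_doeblin[OF row_stochastic_mpow[OF W] col] by simp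
  moreover have "mpow W N ** mpow W (q * N) = mpow W (Suc q * N)"
    by (simp add: mpow_add[symmetric])
  ultimately show ?case by auto
qed

lemma column_between_mpow_mono:
  assumes W: "row_stochastic W" and "s \<le> t" and "column_between (mpow W s) c lo hi"
  shows "column_between (mpow W t) c lo hi"
  using assms(2,3) by (induction t rule: dec_induct) (simp_all add: column_between_mult[OF W])

text \<open>Doeblin's argument: a column of W^N bounded below by d shrinks the spread of every column
  of W^t by the factor 1 - d every N steps, while the w-weighted average of column c of W^t
  stays equal to w_c.\<close>

lemma mpow_tendsto_stationary:
  fixes W :: "real^'n^'n" and w :: "real^'n"
  assumes W: "row_stochastic W" and col: "\<forall>a. d \<le> mpow W N $ a $ v" and "0 < d"
    and w: "\<forall>k. 0 \<le> w $ k" "(\<Sum>k\<in>UNIV. w $ k) = 1" "w v* W = w"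
  shows "(\<lambda>t. mpow W t) \<longlonglongrightarrow> (\<chi> a. w)"
proof (intro vec_tendstoI LIMSEQ_I)
  fix a c and e :: real
  assume "0 < e"
  obtain q where q: "(1 - d) ^ q < e"
    using real_arch_pow_inv[OF \<open>0 < e\<close>, of "1 - d"] \<open>0 < d\<close> by auto
  obtain lo where lo: "column_between (mpow W (q * N)) c lo (lo + (1 - d) ^ q)"
    using mpow_column_contracts[OF W col] by blast
  have "norm (mpow W t $ a $ c - (\<chi> a. w) $ a $ c) < e" if "q * N \<le> t" for t
  proof -
    have band: "\<forall>k. lo \<le> mpow W t $ k $ c \<and> mpow W t $ k $ c \<le> lo + (1 - d) ^ q"
      using column_between_mpow_mono[OF W that lo] by (simp add: column_between_def)
    have "w $ c = (\<Sum>k\<in>UNIV. w $ k * mpow W t $ k $ c)"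
      using arg_cong[OF mpow_left_fixed[OF w(3), of t], of "\<lambda>u. u $ c"]
      by (simp add: vector_matrix_mult_def)
    then have "lo \<le> w $ c \<and> w $ c \<le> lo + (1 - d) ^ q"
      using weighted_sum_bounds[where w="\<lambda>k. w $ k", OF w(1) band] w(2) by simp
    moreover have "lo \<le> mpow W t $ a $ c \<and> mpow W t $ a $ c \<le> lo + (1 - d) ^ q"
      using band by blast
    ultimately show ?thesis
      using q by (simp add: abs_less_iff)
  qed
  then show "\<exists>no. \<forall>t\<ge>no. norm (mpow W t $ a $ c - (\<chi> a. w) $ a $ c) < e"
    by blast
qed

section \<open>Walks in the graph of a matrix\<close>

lemma relpow_mono:
  fixes E F :: "'a rel"
  shows "E \<subseteq> F \<Longrightarrow> E ^^ m \<subseteq> F ^^ m"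
  by (induction m) (simp_all add: relcomp_mono)

lemma add_closed_mult:
  fixes S :: "nat set"
  assumes "0 \<in> S" and "\<And>a b. a \<in> S \<Longrightarrow> b \<in> S \<Longrightarrow> a + b \<in> S" and "b \<in> S"
  shows "q * b \<in> S"
  using assms by (induction q) simp_all

lemma add_closed_Gcd_one_consecutive:
  fixes S :: "nat set"
  assumes zero: "0 \<in> S" and add: "\<And>a b. a \<in> S \<Longrightarrow> b \<in> S \<Longrightarrow> a + b \<in> S"
    and gcd: "Gcd S = 1"
  shows "\<exists>b. b \<in> S \<and> b + 1 \<in> S"
proof -
  note mult = add_closed_mult[of S, OF zero add]
  define D where "D = {g. 0 < g \<and> (\<exists>b\<in>S. b + g \<in> S)}"
  obtain s where "s \<in> S" "s \<noteq> 0"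
  proof (rule ccontr)
    assume "\<not> thesis"
    then have "0 dvd Gcd S" using that by (intro Gcd_greatest) auto
    then show False using gcd by simp
  qed
  then have "s \<in> D" using zero by (auto simp: D_def intro!: bexI[of _ 0])
  define g where "g = (LEAST g. g \<in> D)"
  have "g \<in> D" unfolding g_def by (rule LeastI) fact
  then obtain b where b: "b \<in> S" "b + g \<in> S" "0 < g" by (auto simp: D_def)
  have "g dvd t" if t: "t \<in> S" for t
  proof -
    define q r where "q = t div g" and "r = t mod g"
    \<comment> \<open>A nonzero remainder would be a smaller positive difference of elements of S.\<close>
    have "q * (b + g) + r = t + q * b"
      by (simp add: q_def r_def algebra_simps)
    moreover have "q * (b + g) \<in> S" "t + q * b \<in> S" using mult add b t by auto
    moreover have "r \<notin> D"
      using not_less_Least[of r "\<lambda>g. g \<in> D"] b(3) by (simp add: r_def g_def[symmetric])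
    ultimately have "r = 0" by (auto simp: D_def)
    then show ?thesis by (simp add: r_def dvd_eq_mod_eq_0)
  qed
  then have "g dvd Gcd S" by (intro Gcd_greatest)
  then have "g = 1" using gcd by simp
  with b show ?thesis by auto
qed

lemma add_closed_Gcd_one_cofinite:
  fixes S :: "nat set"
  assumes zero: "0 \<in> S" and add: "\<And>a b. a \<in> S \<Longrightarrow> b \<in> S \<Longrightarrow> a + b \<in> S"
    and gcd: "Gcd S = 1"
  shows "\<exists>M. \<forall>m\<ge>M. m \<in> S"
proof -
  note mult = add_closed_mult[of S, OF zero add]
  obtain b where b: "b \<in> S" "b + 1 \<in> S"
    using add_closed_Gcd_one_consecutive[OF zero add gcd] by blast
  have "m \<in> S" if "b * b \<le> m" for m
  proof (cases "b = 0")
    case True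
    then show ?thesis using mult[of 1 m] b by simp
  next
    case False
    define q r where "q = m div b" and "r = m mod b"
    have "r < b" "b \<le> q"
      using False \<open>b * b \<le> m\<close> by (auto simp: q_def r_def div_le_mono[of "b * b" m b, simplified])
    then have "m = (q - r) * b + r * (b + 1)"
      by (simp add: q_def r_def algebra_simps diff_mult_distrib)
    then show ?thesis using mult b add by metis
  qed
  then show ?thesis by blast
qed

lemma closed_walks_cofinite:
  fixes E :: "'a rel"
  assumes irr: "\<forall>i j. (i, j) \<in> E\<^sup>+"
    and aper: "Gcd {k. 0 < k \<and> (\<exists>i. (i, i) \<in> E ^^ k)} = 1"
  shows "\<exists>M. \<forall>m\<ge>M. (v, v) \<in> E ^^ m"
proof -
  define S where "S = {k. (v, v) \<in> E ^^ k}"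
  have add: "a + b \<in> S" if "a \<in> S" "b \<in> S" for a b
    using that relpow_trans by (auto simp: S_def)
  have "Gcd S dvd k" if "(u, u) \<in> E ^^ k" for u k
  proof -
    obtain a b where "(v, u) \<in> E ^^ a" "(u, v) \<in> E ^^ b"
      using irr trancl_power by metis
    moreover from \<open>(v, u) \<in> E ^^ a\<close> that have "(v, u) \<in> E ^^ (a + k)"
      by (rule relpow_trans)
    ultimately have "a + b \<in> S" "(a + k) + b \<in> S"
      using relpow_trans by (auto simp: S_def)
    then have "Gcd S dvd a + b" "Gcd S dvd (a + b) + k"
      by (auto intro: Gcd_dvd simp: ac_simps)
    then show ?thesis by (simp add: dvd_add_right_iff)
  qed
  then have "Gcd S dvd 1" unfolding aper[symmetric] by (auto intro: Gcd_greatest)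
  then have "\<exists>M. \<forall>m\<ge>M. m \<in> S"
    by (intro add_closed_Gcd_one_cofinite add) (auto simp: S_def)
  then show ?thesis by (simp add: S_def)
qed

lemma walks_of_common_length:
  fixes E :: "'a::finite rel"
  assumes reach: "\<forall>j. (j, v) \<in> E\<^sup>*" and loops: "\<forall>m\<ge>M. (v, v) \<in> E ^^ m"
  shows "\<exists>N. \<forall>j. (j, v) \<in> E ^^ N"
proof -
  have "\<forall>j. \<exists>n. (j, v) \<in> E ^^ n"
    using reach rtrancl_power by blast
  then obtain f where f: "\<forall>j. (j, v) \<in> E ^^ f j"
    by metis
  define N where "N = Max (range f) + M"
  have "(j, v) \<in> E ^^ (f j + (N - f j))" for j
  proof -
    have "f j \<le> Max (range f)" by simp
    then have "M \<le> N - f j" unfolding N_def by linarith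
    then show ?thesis using relpow_trans[OF f[rule_format] loops[rule_format]] by blast
  qed
  then have "(j, v) \<in> E ^^ N" for j
    by (simp add: N_def le_add1 trans_le_add1)
  then show ?thesis by blast
qed

lemma trancl_to_target_rtrancl:
  assumes "(j, v) \<in> E\<^sup>+" and "{(a, b) \<in> E. a \<noteq> v} \<subseteq> F"
  shows "(j, v) \<in> F\<^sup>*"
  using assms(1)
proof (induction rule: converse_trancl_induct)
  case (base y)
  then show ?case using assms(2) by (cases "y = v") auto
next
  case (step y z)
  then show ?case
    using assms(2) by (cases "y = v") (auto intro: converse_rtrancl_into_rtrancl)
qed

lemma mpow_pos_of_walk:
  fixes W :: "real^'n^'n"
  assumes W: "row_stochastic W" and "(j, k) \<in> edges W ^^ m"
  shows "0 < mpow W m $ j $ k"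
  using assms(2)
proof (induction m arbitrary: j)
  case 0
  then show ?case by (simp add: mat_def)
next
  case (Suc m)
  then obtain y where "(j, y) \<in> edges W" "(y, k) \<in> edges W ^^ m"
    using relpow_Suc_D2 by metis
  then have "0 < W $ j $ y * mpow W m $ y $ k"
    using Suc.IH by (simp add: edges_def)
  also have "\<dots> \<le> (\<Sum>l\<in>UNIV. W $ j $ l * mpow W m $ l $ k)"
    using W row_stochastic_mpow[OF W, of m]
    by (intro member_le_sum) (auto simp: row_stochastic_def)
  finally show ?case by (simp add: matrix_mult_entry)
qed

lemma mpow_tendsto_stationary_of_walks:
  fixes W :: "real^'n^'n" and w :: "real^'n"
  assumes W: "row_stochastic W" and reach: "\<forall>j. (j, v) \<in> (edges W)\<^sup>*"
    and loops: "\<forall>m\<ge>M. (v, v) \<in> edges W ^^ m"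
    and w: "\<forall>k. 0 \<le> w$k" "(\<Sum>k\<in>UNIV. w$k) = 1" "w v* W = w"
  shows "(\<lambda>t. mpow W t) \<longlonglongrightarrow> (\<chi> a. w)"
proof -
  obtain N where N: "\<forall>j. (j, v) \<in> edges W ^^ N"
    using walks_of_common_length[OF reach loops] by blast
  define d where "d = Min (range (\<lambda>a. mpow W N $ a $ v))"
  have "0 < d"
    unfolding d_def using mpow_pos_of_walk[OF W] N by (subst Min_gr_iff) auto
  moreover have "\<forall>a. d \<le> mpow W N $ a $ v"
    by (simp add: d_def)
  ultimately show ?thesis
    using mpow_tendsto_stationary[OF W _ _ w] by blast
qed

section \<open>The matrices W(z) and H(z)\<close>

lemma Wmat_entry: "Wmat P z $ a $ b = (1 - z a) * P $ a $ b + (if a = b then z a else 0)"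
proof -
  have "(mat 1 - diagm z) $ a $ k = (if k = a then 1 - z a else 0)" for k
    by (auto simp: mat_def diagm_def)
  then have "((mat 1 - diagm z) ** P) $ a $ b = (\<Sum>k\<in>UNIV. if k = a then (1 - z a) * P $ a $ b else 0)"
    unfolding matrix_mult_entry by (intro sum.cong) auto
  then show ?thesis by (simp add: Wmat_def diagm_def)
qed

lemma row_stochastic_Wmat:
  assumes "row_stochastic P" and "\<forall>a. 0 \<le> z a \<and> z a \<le> 1"
  shows "row_stochastic (Wmat P z)"
proof -
  have "(\<Sum>b\<in>UNIV. Wmat P z $ a $ b) = (1 - z a) * (\<Sum>b\<in>UNIV. P $ a $ b) + z a" for a
    by (simp add: Wmat_entry sum.distrib sum_distrib_left)
  with assms show ?thesis
    by (auto simp: row_stochastic_def Wmat_entry)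
qed

lemma edges_Wmat:
  assumes "0 \<le> z a" and "z a < 1" and "(a, b) \<in> edges P"
  shows "(a, b) \<in> edges (Wmat P z)"
  using assms by (auto simp: edges_def Wmat_entry intro!: add_pos_nonneg)

lemma Wmat_left_fixed:
  assumes "(\<chi> j. c $ j * (1 - z j)) v* P = (\<chi> j. c $ j * (1 - z j))"
  shows "c v* Wmat P z = c"
proof -
  have "c $ a * Wmat P z $ a $ b = c $ a * (1 - z a) * P $ a $ b + (if a = b then c $ b * z b else 0)"
    for a b by (simp add: Wmat_entry algebra_simps)
  then have "(c v* Wmat P z) $ b = ((\<chi> j. c $ j * (1 - z j)) v* P) $ b + c $ b * z b" for b
    by (simp add: vector_matrix_mult_def sum.distrib)
  then show ?thesis
    using assms by (simp add: vec_eq_iff algebra_simps)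
qed

lemma stationary_distribution_pos:
  fixes P :: "real^'n^'n" and p :: "real^'n"
  assumes P: "row_stochastic P" and irr: "irreducible_mat P"
    and nonneg: "\<forall>j. 0 \<le> p $ j" and "p \<noteq> 0" and stat: "p v* P = p"
  shows "0 < p $ j"
proof (rule ccontr)
  assume "\<not> 0 < p $ j"
  then have "p $ j = 0" using nonneg[rule_format, of j] by linarith
  \<comment> \<open>Zeros of a stationary vector propagate backwards along the edges of P.\<close>
  have zero_pred: "p $ a = 0" if "(a, b) \<in> edges P" and "p $ b = 0" for a b
  proof -
    have "p $ a * P $ a $ b \<le> (\<Sum>c\<in>UNIV. p $ c * P $ c $ b)"
      using nonneg P by (intro member_le_sum) (auto simp: row_stochastic_def)
    also have "\<dots> = 0"
      using arg_cong[OF stat, of "\<lambda>u. u $ b"] that(2) by (simp add: vector_matrix_mult_def)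
    finally have "p $ a * P $ a $ b \<le> 0" .
    moreover have "0 < P $ a $ b" using that(1) by (simp add: edges_def)
    ultimately show ?thesis
      using nonneg[rule_format, of a] by (simp add: mult_le_0_iff)
  qed
  have "p $ a = 0" for a
  proof -
    have "(a, j) \<in> (edges P)\<^sup>+" using irr by (simp add: irreducible_mat_def)
    then show ?thesis
      by (induction rule: converse_trancl_induct) (use zero_pred \<open>p $ j = 0\<close> in blast)+
  qed
  then show False using \<open>p \<noteq> 0\<close> by (simp add: vec_eq_iff)
qed

text \<open>Scaling \<pi>_j / (1 - z_j) by 1 - x avoids dividing by 1 - z_i, so that one formula also covers
  the absorbing case x = 1.\<close>

lemma Hmat_update:
  fixes P :: "real^'n^'n" and pi z :: "'n \<Rightarrow> real"
  assumes P: "row_stochastic P" and irr: "irreducible_mat P" and aper: "aperiodic_mat P"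
    and pi: "\<forall>j. 0 < pi j" and stat: "(\<chi> j. pi j) v* P = (\<chi> j. pi j)"
    and z: "\<forall>j. j \<noteq> i \<longrightarrow> 0 \<le> z j \<and> z j < 1" and x: "0 \<le> x" "x \<le> 1"
  defines "c \<equiv> \<lambda>j. if j = i then pi i else pi j * (1 - x) / (1 - z j)"
  shows "Hmat P (z(i := x)) = (\<chi> a b. c b / (\<Sum>j\<in>UNIV. c j))"
proof -
  define W where "W = Wmat P (z(i := x))"
  have W: "row_stochastic W"
    unfolding W_def using P z x by (intro row_stochastic_Wmat) auto
  have kept: "{(a, b) \<in> edges P. a \<noteq> i} \<subseteq> edges W"
    unfolding W_def using z by (auto intro: edges_Wmat)
  have reach: "\<forall>j. (j, i) \<in> (edges W)\<^sup>*"
    using irr trancl_to_target_rtrancl[OF _ kept] by (simp add: irreducible_mat_def)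
  have loops: "\<exists>M. \<forall>m\<ge>M. (i, i) \<in> edges W ^^ m"
  proof (cases "x = 1")
    case True
    then have "(i, i) \<in> edges W" by (simp add: W_def edges_def Wmat_entry)
    then have "(i, i) \<in> edges W ^^ m" for m
      by (induction m) auto
    then show ?thesis by blast
  next
    case False
    then have "edges P \<subseteq> edges W"
      unfolding W_def using z x by (auto intro: edges_Wmat)
    moreover obtain M where "\<forall>m\<ge>M. (i, i) \<in> edges P ^^ m"
      using closed_walks_cofinite[of "edges P" i] irr aper
      unfolding irreducible_mat_def aperiodic_mat_def by blast
    ultimately show ?thesis using relpow_mono by blast
  qed
  define S where "S = (\<Sum>j\<in>UNIV. c j)"
  have c_nonneg: "0 \<le> c j" for j
    using pi z x by (simp add: c_def less_imp_le)
  have "0 < c i" using pi by (simp add: c_def)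
  also have "c i \<le> S"
    unfolding S_def using c_nonneg by (intro member_le_sum) auto
  finally have "0 < S" .
  have "c j * (1 - (z(i := x)) j) = (1 - x) * pi j" for j
    using z[rule_format, of j] by (cases "j = i") (auto simp: c_def)
  then have "(\<chi> j. c j * (1 - (z(i := x)) j)) = (1 - x) *s (\<chi> j. pi j)"
    by (simp add: vec_eq_iff algebra_simps)
  moreover have "((1 - x) *s (\<chi> j. pi j)) v* P = (1 - x) *s (\<chi> j. pi j)"
    by (simp only: scalar_vector_matrix_assoc stat)
  ultimately have "(\<chi> j. c j) v* W = (\<chi> j. c j)"
    unfolding W_def by (intro Wmat_left_fixed) simp
  moreover have "(\<chi> j. c j / S) = inverse S *s (\<chi> j. c j)"
    using \<open>0 < S\<close> by (simp add: vec_eq_iff field_simps)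
  ultimately have "(\<chi> j. c j / S) v* W = (\<chi> j. c j / S)"
    by (simp add: scalar_vector_matrix_assoc)
  moreover have "(\<Sum>j\<in>UNIV. c j / S) = 1"
    using \<open>0 < S\<close> by (simp add: S_def sum_divide_distrib[symmetric])
  ultimately have "(\<lambda>t. mpow W t) \<longlonglongrightarrow> (\<chi> a. \<chi> j. c j / S)"
    using loops \<open>0 < S\<close> c_nonneg
    by (auto intro!: mpow_tendsto_stationary_of_walks[OF W reach])
  then show ?thesis
    unfolding Hmat_def W_def[symmetric] S_def by (rule limI)
qed

lemma cost_update:
  fixes P :: "real^'n^'n" and pi sigma2 z :: "'n \<Rightarrow> real"
  assumes P: "row_stochastic P" and irr: "irreducible_mat P" and aper: "aperiodic_mat P"
    and pi: "\<forall>j. 0 < pi j" and stat: "(\<chi> j. pi j) v* P = (\<chi> j. pi j)"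
    and z: "\<forall>j. j \<noteq> i \<longrightarrow> 0 \<le> z j \<and> z j < 1" and x: "0 \<le> x" "x \<le> 1"
  defines "A \<equiv> \<Sum>j\<in>UNIV - {i}. pi j / (1 - z j)"
    and "B \<equiv> \<Sum>j\<in>UNIV - {i}. (pi j)^2 * sigma2 j / (1 - z j)^2"
  shows "cost P sigma2 i (z(i := x))
           = (sigma2 i * (pi i)^2 + B * (1 - x)^2) / (pi i + A * (1 - x))^2"
proof -
  define c where "c j = (if j = i then pi i else pi j * (1 - x) / (1 - z j))" for j
  have H: "Hmat P (z(i := x)) = (\<chi> a b. c b / (\<Sum>j\<in>UNIV. c j))"
    unfolding c_def by (rule Hmat_update[OF P irr aper pi stat z x])
  have "(\<Sum>j\<in>UNIV - {i}. c j) = (\<Sum>j\<in>UNIV - {i}. (1 - x) * (pi j / (1 - z j)))"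
    by (intro sum.cong) (auto simp: c_def)
  then have S: "(\<Sum>j\<in>UNIV. c j) = pi i + A * (1 - x)"
    by (simp add: sum.remove[of UNIV i] A_def sum_distrib_left c_def mult.commute)
  have "(\<Sum>j\<in>UNIV - {i}. (c j)^2 * sigma2 j)
          = (\<Sum>j\<in>UNIV - {i}. (1 - x)^2 * ((pi j)^2 * sigma2 j / (1 - z j)^2))"
    by (intro sum.cong) (auto simp: c_def power_divide power_mult_distrib)
  then have "(\<Sum>j\<in>UNIV. (c j)^2 * sigma2 j) = sigma2 i * (pi i)^2 + B * (1 - x)^2"
    by (simp add: sum.remove[of UNIV i] B_def sum_distrib_left c_def mult.commute)
  then show ?thesis
    by (simp add: cost_def H S power_divide sum_divide_distrib[symmetric])
qed

section \<open>The best response\<close>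

lemma ratio_of_quadratics_decomposition:
  fixes u a p :: real
  assumes "u + p \<noteq> 0" and "a + p \<noteq> 0"
  shows "(u^2 + a * p) / (u + p)^2 = a / (a + p) + p / (a + p) * ((u - a) / (u + p))^2"
  using assms by (simp add: divide_simps) (simp add: algebra_simps power2_eq_square)

lemma argmin_singleton:
  fixes f :: "'a \<Rightarrow> 'b::linorder"
  assumes "x0 \<in> S" and "\<And>y. y \<in> S \<Longrightarrow> y \<noteq> x0 \<Longrightarrow> f x0 < f y"
  shows "{x \<in> S. \<forall>y\<in>S. f x \<le> f y} = {x0}"
proof (intro equalityI subsetI)
  fix x
  assume "x \<in> {x \<in> S. \<forall>y\<in>S. f x \<le> f y}"
  then have "x \<in> S" and "f x \<le> f x0" using assms(1) by auto
  then show "x \<in> {x0}" using assms(2)[of x] by (cases "x = x0") auto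
next
  fix x
  assume "x \<in> {x0}"
  moreover have "f x0 \<le> f y" if "y \<in> S" for y
    using assms(2)[OF that] by (cases "y = x0") auto
  ultimately show "x \<in> {x \<in> S. \<forall>y\<in>S. f x \<le> f y}" using assms(1) by auto
qed

lemma square_ratio_strict_min:
  fixes r D y :: real
  assumes "r \<le> 1" and "1 < D" and "y \<in> {0..1}" and "y \<noteq> max r 0"
  shows "((r - max r 0) / (D - max r 0))^2 < ((r - y) / (D - y))^2"
proof (cases "0 \<le> r")
  case True
  then show ?thesis using assms by auto
next
  case False
  then have "0 < y" using assms(3,4) by auto
  have "- r / D < (y - r) / (D - y)"
    using False \<open>0 < y\<close> assms(2,3) by (simp add: field_simps)
  moreover have "0 \<le> - r / D"
    using False assms(2) by (simp add: divide_nonpos_pos)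
  ultimately have "(- r / D)^2 < ((y - r) / (D - y))^2"
    by (intro power_strict_mono) auto
  then show ?thesis
    using False by (simp add: power2_eq_square field_simps)
qed

lemma argmin_cost_ratio:
  fixes s p A B :: real
  assumes "0 < s" and "0 < p" and "0 < A" and "0 < B"
  defines "F \<equiv> \<lambda>x. (s * p^2 + B * (1 - x)^2) / (p + A * (1 - x))^2"
  shows "{x \<in> {0..1}. \<forall>y\<in>{0..1}. F x \<le> F y} = {pos_part (1 - A * p * s / B)}"
proof -
  define r D a where "r = 1 - A * p * s / B" and "D = 1 + p / A" and "a = A^2 * p * s / B"
  define g where "g x = ((r - x) / (D - x))^2" for x
  define \<alpha> \<beta> where "\<alpha> = B / A^2 * (a / (a + p))" and "\<beta> = B / A^2 * (p / (a + p))"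
  have "r \<le> 1" "1 < D" "0 < a" using assms by (auto simp: r_def D_def a_def)
  have F_g: "F x = \<alpha> + \<beta> * g x" if "x \<le> 1" for x
  proof -
    \<comment> \<open>Completing the square in u = A (1 - x).\<close>
    define u where "u = A * (1 - x)"
    have "0 \<le> u" using assms(3) that by (simp add: u_def)
    have "B / A^2 * (u^2 + a * p) = s * p^2 + B * (1 - x)^2"
      using assms by (simp add: u_def a_def field_simps power2_eq_square)
    moreover have "(u - a) / (u + p) = (r - x) / (D - x)"
    proof -
      have "u - a = A * (r - x)" "u + p = A * (D - x)"
        using assms(3) by (simp_all add: u_def a_def r_def D_def field_simps power2_eq_square)
      then show ?thesis using assms(3) by simp
    qed
    ultimately have "F x = B / A^2 * ((u^2 + a * p) / (u + p)^2)"
      by (simp add: F_def u_def add.commute)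
    also have "\<dots> = B / A^2 * (a / (a + p) + p / (a + p) * g x)"
      using ratio_of_quadratics_decomposition[of u p a] \<open>0 \<le> u\<close> \<open>0 < a\<close> assms(2)
        \<open>(u - a) / (u + p) = (r - x) / (D - x)\<close>
      by (simp add: g_def)
    finally show ?thesis by (simp add: \<alpha>_def \<beta>_def distrib_left)
  qed
  have "0 < \<beta>" using assms \<open>0 < a\<close> by (simp add: \<beta>_def)
  have "F (max r 0) < F y" if "y \<in> {0..1}" "y \<noteq> max r 0" for y
  proof -
    have "g (max r 0) < g y"
      using square_ratio_strict_min[OF \<open>r \<le> 1\<close> \<open>1 < D\<close> that] by (simp add: g_def)
    then show ?thesis
      using F_g[of y] F_g[of "max r 0"] that \<open>r \<le> 1\<close> \<open>0 < \<beta>\<close> by simp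
  qed
  then have "{x \<in> {0..1}. \<forall>y\<in>{0..1}. F x \<le> F y} = {max r 0}"
    using \<open>r \<le> 1\<close> by (intro argmin_singleton) auto
  then show ?thesis
    by (simp add: pos_part_def r_def)
qed

lemma UNIV_Diff_singleton_nonempty:
  assumes "2 \<le> CARD('a)"
  shows "UNIV - {i :: 'a} \<noteq> {}"
proof
  assume "UNIV - {i} = {}"
  then have "CARD('a) - 1 = 0"
    by (metis card.empty card_Diff_singleton finite UNIV_I)
  with assms show False by linarith
qed

theorem proposition3:
  fixes P :: "real^'n^'n" and pi :: "'n \<Rightarrow> real" and sigma2 :: "'n \<Rightarrow> real"
    and z :: "'n \<Rightarrow> real" and i :: 'n
  assumes "CARD('n) \<ge> 2"
    and "row_stochastic P" and "irreducible_mat P" and "aperiodic_mat P"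
    and "\<forall>j. pi j \<ge> 0" and "(\<Sum>j\<in>UNIV. pi j) = 1"
    and "transpose P *v (\<chi> j. pi j) = (\<chi> j. pi j)"
    and "\<forall>j. sigma2 j > 0"
    and "\<forall>j. j \<noteq> i \<longrightarrow> 0 \<le> z j \<and> z j < 1"
  shows "best_response P sigma2 i z =
           {pos_part (1 - (\<Sum>j\<in>UNIV-{i}. pi j / (1 - z j)) * pi i * sigma2 i
                        / (\<Sum>j\<in>UNIV-{i}. (pi j)^2 * sigma2 j / (1 - z j)^2))}
       \<and> best_response P sigma2 i z \<subseteq> {0..<1}"
proof -
  note P = assms(2,3,4) and sigma = assms(8) and z = assms(9)
  define A where "A = (\<Sum>j\<in>UNIV - {i}. pi j / (1 - z j))"
  define B where "B = (\<Sum>j\<in>UNIV - {i}. (pi j)^2 * sigma2 j / (1 - z j)^2)"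
  have stat: "(\<chi> j. pi j) v* P = (\<chi> j. pi j)" using assms(7) by simp
  moreover have "(\<chi> j. pi j) \<noteq> 0"
    using assms(6) by (metis sum.neutral vec_lambda_beta zero_index zero_neq_one)
  ultimately have pi: "\<forall>j. 0 < pi j"
    using stationary_distribution_pos[OF assms(2,3), of "\<chi> j. pi j"] assms(5) by simp
  have "0 < pi j / (1 - z j)" "0 < (pi j)^2 * sigma2 j / (1 - z j)^2" if "j \<noteq> i" for j
    using pi[rule_format, of j] sigma[rule_format, of j] z[rule_format, of j] that by simp_all
  then have "0 < A" "0 < B"
    using UNIV_Diff_singleton_nonempty[OF assms(1), of i] unfolding A_def B_def
    by (auto intro!: sum_pos)
  have "best_response P sigma2 i z = {x \<in> {0..1}. \<forall>y\<in>{0..1}.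
      (sigma2 i * (pi i)^2 + B * (1 - x)^2) / (pi i + A * (1 - x))^2
      \<le> (sigma2 i * (pi i)^2 + B * (1 - y)^2) / (pi i + A * (1 - y))^2}"
    unfolding best_response_def A_def B_def
    using cost_update[OF P pi stat z] by (intro Collect_cong) auto
  also have "\<dots> = {pos_part (1 - A * pi i * sigma2 i / B)}"
    using argmin_cost_ratio[OF sigma[rule_format] pi[rule_format] \<open>0 < A\<close> \<open>0 < B\<close>] by simp
  finally show ?thesis
    using pi sigma \<open>0 < A\<close> \<open>0 < B\<close> by (auto simp: A_def B_def pos_part_def)
qed

end
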